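(* Let $\Gamma$ be a set of FOML formulas and $\varphi$ a FOML formula (as defined in the context). If $\Gamma^{\mathrm{ML}},\mathcal{H}(\Gamma\cup\{\varphi\})\models_{\mathrm{ML}}\varphi^{\mathrm{ML}}$, then $\Gamma\models\varphi$.
   Context: FOML syntax. Fix pairwise disjoint, non-empty, denumerable sets $\mathcal{X}$ (rigid variables), $\mathcal{V}$ (flexible variables) and $\mathcal{O}$ (operator symbols with arities). Expressions are given by $e ::= x \mid v \mid op(e,\ldots,e) \mid e=e \mid \mathrm{FALSE} \mid e\Rightarrow e \mid \forall x: e \mid \nabla e$ with $x\in\mathcal{X}$, $v\in\mathcal{V}$, $op\in\mathcal{O}$ applied with the correct arity. Terms and formulas are not distinguished. Only rigid variables are bound. An expression is rigid iff it contains no flexible variable and no subexpression of the form $\nabla e$. FOML semantics. A Kripke model is $\mathcal{M}=(\mathcal{I},\xi,\mathcal{W},R,\zeta,\nabla_\mathcal{M})$, where: - $\mathcal{I}$ is a first-order interpretation whose universe contains distinct values $\mathsf{tt},\mathsf{ff}$, with $\mathcal{I}(op):|\mathcal{I}|^n\to|\mathcal{I}|$; - $\xi:\mathcal{X}\to|\mathcal{I}|$; - $\mathcal{W}$ is a non-empty set of states and $R\subseteq\mathcal{W}^2$; - $\zeta:\mathcal{V}\times\mathcal{W}\to|\mathcal{I}|$; - $\nabla_\mathcal{M}:2^{|\mathcal{I}|}\to|\mathcal{I}|$ satisfies $\nabla_\mathcal{M}(S)=\mathsf{tt}$ iff $S\subseteq\{\mathsf{tt}\}$. Values $[\![e]\!]^\mathcal{M}_w$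 are defined as follows. - $[\![x]\!]_w=\xi(x)$ and $[\![v]\!]_w=\zeta(v,w)$. - $[\![op(\vec e)]\!]_w=\mathcal{I}(op)([\![e_1]\!]_w,\ldots)$. - $[\![e_1=e_2]\!]_w$ is $\mathsf{tt}$ iff the two values are equal, and $\mathsf{ff}$ otherwise. - $[\![\mathrm{FALSE}]\!]_w=\mathsf{ff}$. - $[\![\varphi\Rightarrow\psi]\!]_w=\mathsf{tt}$ iff $[\![\varphi]\!]_w\ne\mathsf{tt}$ or $[\![\psi]\!]_w=\mathsf{tt}$, and $\mathsf{ff}$ otherwise. - $[\![\forall x:\varphi]\!]^\mathcal{M}_w=\mathsf{tt}$ iff $[\![\varphi]\!]^{\mathcal{M}'}_w=\mathsf{tt}$ for all $\mathcal{M}'$ differing from $\mathcal{M}$ only at $\xi(x)$, and $\mathsf{ff}$ otherwise. - $[\![\nabla\varphi]\!]_w=\nabla_\mathcal{M}(\{[\![\varphi]\!]_{w'}:(w,w')\in R\})$. $\mathcal{M},w\models\varphi$ means $[\![\varphi]\!]^\mathcal{M}_w=\mathsf{tt}$. $\Gamma\models\varphi$ iff for every $\mathcal{M}$, if $\mathcal{M},w\models\psi$ for all $\psi\in\Gamma$ and all $w$, then $\mathcal{M},w\models\varphi$ for all $w$. Propositional modal logic ML. Formulas are built from propositional (flexible) variables, $\mathrm{FALSE}$, $\Rightarrow$ and $\nabla$. A Kripke model is $\mathcal{K}=(\mathcal{W},R,\zeta)$ with $\zeta$ assigning $\mathsf{tt}$ or $\mathsf{ff}$ to each variable at each state. The semantics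 is the standard one: $\nabla\varphi$ holds at $w$ iff $\varphi$ holds at every $w'$ with $(w,w')\in R$. $\Gamma\models_{\mathrm{ML}}\varphi$ iff for every $\mathcal{K}$, if every formula of $\Gamma$ holds at all states, then $\varphi$ holds at all states. Coalescing to ML. $e^{\mathrm{ML}}$ is defined by: - $x^{\mathrm{ML}}=[x]$ for $x\in\mathcal{X}$, and $v^{\mathrm{ML}}=v$ for $v\in\mathcal{V}$; - $op(t_1,\ldots,t_n)^{\mathrm{ML}}=[op(t_1,\ldots,t_n)]$; - $(e_1=e_2)^{\mathrm{ML}}=[e_1=e_2]$; - $\mathrm{FALSE}^{\mathrm{ML}}=\mathrm{FALSE}$; - $(e_1\Rightarrow e_2)^{\mathrm{ML}}=e_1^{\mathrm{ML}}\Rightarrow e_2^{\mathrm{ML}}$; - $(\forall x:e)^{\mathrm{ML}}=[\forall x:e]$; - $(\nabla e)^{\mathrm{ML}}=\nabla e^{\mathrm{ML}}$. Here each $[e]$ is a fresh propositional flexible variable, and variables $[e]$ and $[e']$ are identified iff $e$ and $e'$ are $\alpha$-equivalent. $\Gamma^{\mathrm{ML}}=\{\psi^{\mathrm{ML}}:\psi\in\Gamma\}$. For a set $\Delta$ of FOML formulas, $\mathcal{H}(\Delta)$ is the set of all formulas $[e]\Rightarrow\nabla[e]$ such that $[e]$ is a fresh variable introduced in $\Delta^{\mathrm{ML}}$ and $e$ is a rigid expression. *)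

theory Defs
  imports Main "HOL-Library.Countable" "HOL-Library.Infinite_Typeclass"
begin

text \<open>'x: rigid variables, 'v: flexible variables, 'o: operator symbols.
  Disjointness is automatic (separate types); denumerability is imposed in the
  theorem via the sort constraints countable + infinite.\<close>

datatype ('x, 'v, 'o) expr =
    RVar 'x
  | FVar 'v
  | Op 'o "('x, 'v, 'o) expr list"
  | Eq "('x, 'v, 'o) expr" "('x, 'v, 'o) expr"
  | FALSE
  | Imp "('x, 'v, 'o) expr" "('x, 'v, 'o) expr"
  | All 'x "('x, 'v, 'o) expr"
  | Nabla "('x, 'v, 'o) expr"

fun wf :: "('o \<Rightarrow> nat) \<Rightarrow> ('x, 'v, 'o) expr \<Rightarrow> bool" where
  "wf ar (RVar x) = True"
| "wf ar (FVar v) = True"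
| "wf ar (Op f es) = (length es = ar f \<and> (\<forall>e\<in>set es. wf ar e))"
| "wf ar (Eq a b) = (wf ar a \<and> wf ar b)"
| "wf ar FALSE = True"
| "wf ar (Imp a b) = (wf ar a \<and> wf ar b)"
| "wf ar (All x a) = wf ar a"
| "wf ar (Nabla a) = wf ar a"

fun rigid :: "('x, 'v, 'o) expr \<Rightarrow> bool" where
  "rigid (RVar x) = True"
| "rigid (FVar v) = False"
| "rigid (Op f es) = (\<forall>e\<in>set es. rigid e)"
| "rigid (Eq a b) = (rigid a \<and> rigid b)"
| "rigid FALSE = True"
| "rigid (Imp a b) = (rigid a \<and> rigid b)"
| "rigid (All x a) = rigid a"
| "rigid (Nabla a) = False"

text \<open>Parameters: tt, ff (distinguished truth values),
  I (interpretation of operators, applied to the argument list), xi (rigid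
  valuation), R (accessibility), zeta (flexible valuation), nab (the function
  nabla_M), w (current state).\<close>
fun eval :: "'u \<Rightarrow> 'u \<Rightarrow> ('o \<Rightarrow> 'u list \<Rightarrow> 'u) \<Rightarrow> ('x \<Rightarrow> 'u) \<Rightarrow> ('w \<times> 'w) set
   \<Rightarrow> ('v \<Rightarrow> 'w \<Rightarrow> 'u) \<Rightarrow> ('u set \<Rightarrow> 'u) \<Rightarrow> 'w \<Rightarrow> ('x, 'v, 'o) expr \<Rightarrow> 'u" where
  "eval tt ff I xi R zeta nab w (RVar x) = xi x"
| "eval tt ff I xi R zeta nab w (FVar v) = zeta v w"
| "eval tt ff I xi R zeta nab w (Op f es) = I f (map (eval tt ff I xi R zeta nab w) es)"
| "eval tt ff I xi R zeta nab w (Eq a b) =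
     (if eval tt ff I xi R zeta nab w a = eval tt ff I xi R zeta nab w b then tt else ff)"
| "eval tt ff I xi R zeta nab w FALSE = ff"
| "eval tt ff I xi R zeta nab w (Imp a b) =
     (if eval tt ff I xi R zeta nab w a \<noteq> tt \<or> eval tt ff I xi R zeta nab w b = tt then tt else ff)"
| "eval tt ff I xi R zeta nab w (All x a) =
     (if (\<forall>u. eval tt ff I (xi(x := u)) R zeta nab w a = tt) then tt else ff)"
| "eval tt ff I xi R zeta nab w (Nabla a) =
     nab {eval tt ff I xi R zeta nab w' a | w'. (w, w') \<in> R}"

definition foml_model :: "'u \<Rightarrow> 'u \<Rightarrow> 'w set \<Rightarrow> ('w \<times> 'w) set \<Rightarrow> ('u set \<Rightarrow> 'u) \<Rightarrow> bool" where
  "foml_model tt ff W R nab \<longleftrightarrow>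
     tt \<noteq> ff \<and> W \<noteq> {} \<and> R \<subseteq> W \<times> W \<and> (\<forall>S. nab S = tt \<longleftrightarrow> S \<subseteq> {tt})"

definition foml_entails :: "'u itself \<Rightarrow> 'w itself \<Rightarrow> ('x, 'v, 'o) expr set \<Rightarrow> ('x, 'v, 'o) expr \<Rightarrow> bool" where
  "foml_entails (TYPE('u)) (TYPE('w)) \<Gamma> \<phi> \<longleftrightarrow>
     (\<forall>(tt::'u) ff I xi (W::'w set) R zeta nab.
        foml_model tt ff W R nab \<longrightarrow>
        (\<forall>\<psi>\<in>\<Gamma>. \<forall>w\<in>W. eval tt ff I xi R zeta nab w \<psi> = tt) \<longrightarrow>
        (\<forall>w\<in>W. eval tt ff I xi R zeta nab w \<phi> = tt))"

datatype 'a mlform = PVar 'a | MFALSE | MImp "'a mlform" "'a mlform" | MNabla "'a mlform"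

fun mlsat :: "('w \<times> 'w) set \<Rightarrow> ('a \<Rightarrow> 'w \<Rightarrow> bool) \<Rightarrow> 'w \<Rightarrow> 'a mlform \<Rightarrow> bool" where
  "mlsat R zeta w (PVar p) = zeta p w"
| "mlsat R zeta w MFALSE = False"
| "mlsat R zeta w (MImp a b) = (mlsat R zeta w a \<longrightarrow> mlsat R zeta w b)"
| "mlsat R zeta w (MNabla a) = (\<forall>w'. (w, w') \<in> R \<longrightarrow> mlsat R zeta w' a)"

definition ml_entails :: "'w itself \<Rightarrow> 'a mlform set \<Rightarrow> 'a mlform \<Rightarrow> bool" where
  "ml_entails (TYPE('w)) \<Gamma> \<phi> \<longleftrightarrow>
     (\<forall>(W::'w set) R zeta. W \<noteq> {} \<longrightarrow> R \<subseteq> W \<times> W \<longrightarrow>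
        (\<forall>\<psi>\<in>\<Gamma>. \<forall>w\<in>W. mlsat R zeta w \<psi>) \<longrightarrow> (\<forall>w\<in>W. mlsat R zeta w \<phi>))"

datatype ('x, 'v, 'o) dbexpr =
    DRVar 'x
  | DBound nat
  | DFVar 'v
  | DOp 'o "('x, 'v, 'o) dbexpr list"
  | DEq "('x, 'v, 'o) dbexpr" "('x, 'v, 'o) dbexpr"
  | DFALSE
  | DImp "('x, 'v, 'o) dbexpr" "('x, 'v, 'o) dbexpr"
  | DAll "('x, 'v, 'o) dbexpr"
  | DNabla "('x, 'v, 'o) dbexpr"

fun bidx :: "'x list \<Rightarrow> 'x \<Rightarrow> nat" where
  "bidx [] x = 0"
| "bidx (y # ys) x = (if x = y then 0 else Suc (bidx ys x))"

fun db :: "'x list \<Rightarrow> ('x, 'v, 'o) expr \<Rightarrow> ('x, 'v, 'o) dbexpr" where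
  "db env (RVar x) = (if x \<in> set env then DBound (bidx env x) else DRVar x)"
| "db env (FVar v) = DFVar v"
| "db env (Op f es) = DOp f (map (db env) es)"
| "db env (Eq a b) = DEq (db env a) (db env b)"
| "db env FALSE = DFALSE"
| "db env (Imp a b) = DImp (db env a) (db env b)"
| "db env (All x a) = DAll (db (x # env) a)"
| "db env (Nabla a) = DNabla (db env a)"

definition alpha_eq :: "('x, 'v, 'o) expr \<Rightarrow> ('x, 'v, 'o) expr \<Rightarrow> bool" where
  "alpha_eq e e' \<longleftrightarrow> db [] e = db [] e'"

text \<open>ML propositional variables: the flexible variables v, plus fresh variables
  [e], where [e] and [e'] coincide iff e and e' are alpha-equivalent (we index
  [e] by the alpha-invariant de Bruijn form of e).\<close>
datatype ('x, 'v, 'o) mlatom = Flex 'v | Fresh "('x, 'v, 'o) dbexpr"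

definition box :: "('x, 'v, 'o) expr \<Rightarrow> ('x, 'v, 'o) mlatom" where
  "box e = Fresh (db [] e)"

fun toML :: "('x, 'v, 'o) expr \<Rightarrow> ('x, 'v, 'o) mlatom mlform" where
  "toML (RVar x) = PVar (box (RVar x))"
| "toML (FVar v) = PVar (Flex v)"
| "toML (Op f es) = PVar (box (Op f es))"
| "toML (Eq a b) = PVar (box (Eq a b))"
| "toML FALSE = MFALSE"
| "toML (Imp a b) = MImp (toML a) (toML b)"
| "toML (All x a) = PVar (box (All x a))"
| "toML (Nabla a) = MNabla (toML a)"

text \<open>The expressions e whose fresh variable [e] is introduced in e0^ML.\<close>
fun introduced :: "('x, 'v, 'o) expr \<Rightarrow> ('x, 'v, 'o) expr set" where
  "introduced (RVar x) = {RVar x}"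
| "introduced (FVar v) = {}"
| "introduced (Op f es) = {Op f es}"
| "introduced (Eq a b) = {Eq a b}"
| "introduced FALSE = {}"
| "introduced (Imp a b) = introduced a \<union> introduced b"
| "introduced (All x a) = {All x a}"
| "introduced (Nabla a) = introduced a"

definition toML_set :: "('x, 'v, 'o) expr set \<Rightarrow> ('x, 'v, 'o) mlatom mlform set" where
  "toML_set \<Gamma> = toML ` \<Gamma>"

definition H :: "('x, 'v, 'o) expr set \<Rightarrow> ('x, 'v, 'o) mlatom mlform set" where
  "H \<Delta> = {MImp (PVar (box e)) (MNabla (PVar (box e))) | e.
             e \<in> (\<Union>\<delta>\<in>\<Delta>. introduced \<delta>) \<and> rigid e}"

end

theory Submission
  imports Defs
begin

text \<open>A FOML model M induces a Kripke model on the same frame in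
  which a flexible variable v holds where its value is tt, and a fresh variable [e] holds
  where e evaluates to tt; this is well defined because alpha-equivalent expressions have the
  same value. Since the Boolean connectives and nabla are evaluated identically on both sides,
  e^ML holds at w iff e is true at w, so the premises Gamma^ML hold everywhere. The extra
  premises H(Delta) hold as well, because a rigid expression has the same value at every
  state. Hence phi^ML, and with it phi, holds everywhere.\<close>

fun db_eval :: "'u \<Rightarrow> 'u \<Rightarrow> ('o \<Rightarrow> 'u list \<Rightarrow> 'u) \<Rightarrow> ('x \<Rightarrow> 'u) \<Rightarrow> ('w \<times> 'w) set
   \<Rightarrow> ('v \<Rightarrow> 'w \<Rightarrow> 'u) \<Rightarrow> ('u set \<Rightarrow> 'u) \<Rightarrow> 'w \<Rightarrow> 'u list \<Rightarrow> ('x, 'v, 'o) dbexpr \<Rightarrow> 'u" where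
  "db_eval tt ff I xi R zeta nab w vs (DRVar x) = xi x"
| "db_eval tt ff I xi R zeta nab w vs (DBound n) = vs ! n"
| "db_eval tt ff I xi R zeta nab w vs (DFVar v) = zeta v w"
| "db_eval tt ff I xi R zeta nab w vs (DOp f es) = I f (map (db_eval tt ff I xi R zeta nab w vs) es)"
| "db_eval tt ff I xi R zeta nab w vs (DEq a b) =
     (if db_eval tt ff I xi R zeta nab w vs a = db_eval tt ff I xi R zeta nab w vs b then tt else ff)"
| "db_eval tt ff I xi R zeta nab w vs DFALSE = ff"
| "db_eval tt ff I xi R zeta nab w vs (DImp a b) =
     (if db_eval tt ff I xi R zeta nab w vs a \<noteq> tt \<or> db_eval tt ff I xi R zeta nab w vs b = tt
      then tt else ff)"
| "db_eval tt ff I xi R zeta nab w vs (DAll a) =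
     (if (\<forall>u. db_eval tt ff I xi R zeta nab w (u # vs) a = tt) then tt else ff)"
| "db_eval tt ff I xi R zeta nab w vs (DNabla a) =
     nab {db_eval tt ff I xi R zeta nab w' vs a | w'. (w, w') \<in> R}"

lemma eval_eq_db_eval:
  assumes "\<forall>x\<in>set env. xi x = vs ! bidx env x"
    and "\<forall>x. x \<notin> set env \<longrightarrow> xi x = xi0 x"
  shows "eval tt ff I xi R zeta nab w e = db_eval tt ff I xi0 R zeta nab w vs (db env e)"
  using assms
proof (induction e arbitrary: env vs xi w)
  case (All x a)
  have "eval tt ff I (xi(x := u)) R zeta nab w a
      = db_eval tt ff I xi0 R zeta nab w (u # vs) (db (x # env) a)" for u
    using All.prems by (intro All.IH) auto
  then show ?case by simp
qed (auto cong: map_cong)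

lemma eval_alpha_eq:
  "alpha_eq e e' \<Longrightarrow> eval tt ff I xi R zeta nab w e = eval tt ff I xi R zeta nab w e'"
  using eval_eq_db_eval[of "[]" xi "[]" xi tt ff I R zeta nab w]
  by (simp add: alpha_eq_def)

lemma eval_rigid_state_independent:
  "rigid e \<Longrightarrow> eval tt ff I xi R zeta nab w e = eval tt ff I xi R zeta nab w' e"
  by (induction e arbitrary: xi) (auto cong: map_cong)

definition coalesced_valuation :: "'u \<Rightarrow> 'u \<Rightarrow> ('o \<Rightarrow> 'u list \<Rightarrow> 'u) \<Rightarrow> ('x \<Rightarrow> 'u)
   \<Rightarrow> ('w \<times> 'w) set \<Rightarrow> ('v \<Rightarrow> 'w \<Rightarrow> 'u) \<Rightarrow> ('u set \<Rightarrow> 'u) \<Rightarrow> ('x, 'v, 'o) mlatom \<Rightarrow> 'w \<Rightarrow> bool"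
  where
  "coalesced_valuation tt ff I xi R zeta nab a w =
     (case a of
        Flex v \<Rightarrow> zeta v w = tt
      | Fresh d \<Rightarrow> (\<exists>e. db [] e = d \<and> eval tt ff I xi R zeta nab w e = tt))"

lemma coalesced_valuation_Flex [simp]:
  "coalesced_valuation tt ff I xi R zeta nab (Flex v) w \<longleftrightarrow> zeta v w = tt"
  by (simp add: coalesced_valuation_def)

lemma coalesced_valuation_box [simp]:
  "coalesced_valuation tt ff I xi R zeta nab (box e) w \<longleftrightarrow> eval tt ff I xi R zeta nab w e = tt"
  by (auto simp: coalesced_valuation_def box_def) (metis alpha_eq_def eval_alpha_eq)

lemma mlsat_toML_iff:
  assumes "tt \<noteq> ff" and "\<forall>S. nab S = tt \<longleftrightarrow> S \<subseteq> {tt}"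
  shows "mlsat R (coalesced_valuation tt ff I xi R zeta nab) w (toML e)
     \<longleftrightarrow> eval tt ff I xi R zeta nab w e = tt"
  using assms by (induction e arbitrary: w rule: toML.induct) auto

lemma mlsat_H:
  "\<psi> \<in> H \<Delta> \<Longrightarrow> mlsat R (coalesced_valuation tt ff I xi R zeta nab) w \<psi>"
  by (auto simp: H_def) (metis eval_rigid_state_independent)

theorem theorem2:
  fixes ar :: "'o::{countable,infinite} \<Rightarrow> nat"
    and \<Gamma> :: "('x::{countable,infinite}, 'v::{countable,infinite}, 'o) expr set"
    and \<phi> :: "('x, 'v, 'o) expr"
  assumes "\<forall>\<psi>\<in>\<Gamma>. wf ar \<psi>"
    and "wf ar \<phi>"
    and "ml_entails TYPE('w) (toML_set \<Gamma> \<union> H (\<Gamma> \<union> {\<phi>})) (toML \<phi>)"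
  shows "foml_entails TYPE('u) TYPE('w) \<Gamma> \<phi>"
  unfolding foml_entails_def
proof (intro allI impI)
  fix tt ff :: 'u and I xi and W :: "'w set" and R zeta nab
  assume "foml_model tt ff W R nab"
    and \<Gamma>_valid: "\<forall>\<psi>\<in>\<Gamma>. \<forall>w\<in>W. eval tt ff I xi R zeta nab w \<psi> = tt"
  then have model: "tt \<noteq> ff" "W \<noteq> {}" "R \<subseteq> W \<times> W" "\<forall>S. nab S = tt \<longleftrightarrow> S \<subseteq> {tt}"
    by (auto simp: foml_model_def)
  let ?val = "coalesced_valuation tt ff I xi R zeta nab"
  note toML_iff = mlsat_toML_iff[OF model(1,4)]
  have "\<forall>\<psi>\<in>toML_set \<Gamma> \<union> H (\<Gamma> \<union> {\<phi>}). \<forall>w\<in>W. mlsat R ?val w \<psi>"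
    using \<Gamma>_valid by (auto simp: toML_set_def toML_iff mlsat_H)
  then have "\<forall>w\<in>W. mlsat R ?val w (toML \<phi>)"
    using assms(3) model(2,3) unfolding ml_entails_def by blast
  then show "\<forall>w\<in>W. eval tt ff I xi R zeta nab w \<phi> = tt"
    by (simp add: toML_iff)
qed

end
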